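(* Let $F$ be a field with $\mathrm{char}\,F\ne2,3$ and let $\mathrm{Gr}_3$ be the Grassmann algebra over $F$ of a 3-dimensional vector space. Then $\mathrm{rb}(\mathrm{Gr}_3)=3$.
   Context: A linear operator $R$ on $A$ is a Rota–Baxter operator of weight $0$ if $R(x)R(y)=R(R(x)y+xR(y))$ for all $x,y\in A$. The RB-index $\mathrm{rb}(A)$ is the least $n\in\mathbb N$ such that $R^n=0$ for every Rota–Baxter operator $R$ of weight zero on $A$. *)

theory Defs
  imports Main
begin

text \<open>An element is represented by its
coefficient function on subsets of nat, vanishing outside Pow {0,1,2}.\<close>

definition gr3_carrier :: "(nat set \<Rightarrow> 'a::field) set" where
  "gr3_carrier = {x. \<forall>S. \<not> S \<subseteq> {0,1,2} \<longrightarrow> x S = 0}"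

text \<open>Sign of e_T * e_U (for disjoint T, U): (-1) to the number of inversions.\<close>
definition gsign :: "nat set \<Rightarrow> nat set \<Rightarrow> 'a::field" where
  "gsign T U = (-1) ^ card {(i, j). i \<in> T \<and> j \<in> U \<and> j < i}"

definition gr3_mult :: "(nat set \<Rightarrow> 'a::field) \<Rightarrow> (nat set \<Rightarrow> 'a) \<Rightarrow> (nat set \<Rightarrow> 'a)" where
  "gr3_mult x y = (\<lambda>S. if S \<subseteq> {0,1,2}
      then (\<Sum>T\<in>Pow S. gsign T (S - T) * x T * y (S - T)) else 0)"

definition gr3_linear :: "((nat set \<Rightarrow> 'a::field) \<Rightarrow> (nat set \<Rightarrow> 'a)) \<Rightarrow> bool" where
  "gr3_linear R \<longleftrightarrow>
     (\<forall>x\<in>gr3_carrier. R x \<in> gr3_carrier) \<and>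
     (\<forall>x\<in>gr3_carrier. \<forall>y\<in>gr3_carrier. R (\<lambda>S. x S + y S) = (\<lambda>S. R x S + R y S)) \<and>
     (\<forall>c::'a. \<forall>x\<in>gr3_carrier. R (\<lambda>S. c * x S) = (\<lambda>S. c * R x S))"

definition gr3_RB0 :: "((nat set \<Rightarrow> 'a::field) \<Rightarrow> (nat set \<Rightarrow> 'a)) \<Rightarrow> bool" where
  "gr3_RB0 R \<longleftrightarrow> gr3_linear R \<and>
     (\<forall>x\<in>gr3_carrier. \<forall>y\<in>gr3_carrier.
        gr3_mult (R x) (R y) = R (\<lambda>S. gr3_mult (R x) y S + gr3_mult x (R y) S))"

definition rb_gr3 :: "'a::field itself \<Rightarrow> nat" where
  "rb_gr3 _ = (LEAST n. \<forall>R :: (nat set \<Rightarrow> 'a) \<Rightarrow> (nat set \<Rightarrow> 'a).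
      gr3_RB0 R \<longrightarrow> (\<forall>x\<in>gr3_carrier. (R ^^ n) x = (\<lambda>S. 0)))"

end

theory Submission
  imports Defs "HOL-Library.Function_Algebras"
begin

text \<open>A weight-zero Rota--Baxter operator \<open>R\<close> on \<open>Gr\<^sub>3\<close> has no scalar part in its image:
  the image is a subalgebra, so otherwise it would contain \<open>1\<close>, and \<open>R z = 1\<close> forces
  \<open>1 = R (2 z) = 2\<close>. Using this, the identity for \<open>(e\<^sub>0\<^sub>1\<^sub>2, y)\<close> gives \<open>R e\<^sub>0\<^sub>1\<^sub>2 = 0\<close>, the
  identity for \<open>(1, 1)\<close> shows that \<open>R (R 1) = (R 1)\<^sup>2 / 2\<close> is a multiple of \<open>e\<^sub>0\<^sub>1\<^sub>2\<close>, and
  adding the identities for \<open>(x, 1)\<close> and \<open>(1, x)\<close> shows that \<open>R (R x)\<close> is a multiple of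
  \<open>e\<^sub>0\<^sub>1\<^sub>2\<close> too; hence \<open>R\<^sup>3 = 0\<close>. Conversely, \<open>1 \<mapsto> e\<^sub>0 + e\<^sub>1\<^sub>2\<close>, \<open>e\<^sub>0 \<mapsto> e\<^sub>0\<^sub>1\<^sub>2\<close>, other
  monomials \<open>\<mapsto> 0\<close> is a Rota--Baxter operator with \<open>R\<^sup>2 1 = e\<^sub>0\<^sub>1\<^sub>2 \<noteq> 0\<close>.\<close>

text \<open>Coordinates with respect to the monomials
  \<open>1, e\<^sub>0, e\<^sub>1, e\<^sub>2, e\<^sub>0\<^sub>1, e\<^sub>0\<^sub>2, e\<^sub>1\<^sub>2, e\<^sub>0\<^sub>1\<^sub>2\<close>, in this order.\<close>
definition gr3_vec :: "'a::field \<Rightarrow> 'a \<Rightarrow> 'a \<Rightarrow> 'a \<Rightarrow> 'a \<Rightarrow> 'a \<Rightarrow> 'a \<Rightarrow> 'a \<Rightarrow> nat set \<Rightarrow> 'a" where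
  "gr3_vec c0 c1 c2 c3 c4 c5 c6 c7 = (\<lambda>S. if S \<subseteq> {0,1,2} then
     (if 0 \<in> S then (if 1 \<in> S then (if 2 \<in> S then c7 else c4) else (if 2 \<in> S then c5 else c1))
      else (if 1 \<in> S then (if 2 \<in> S then c6 else c2) else (if 2 \<in> S then c3 else c0))) else 0)"

abbreviation gr3_one :: "nat set \<Rightarrow> 'a::field" where
  "gr3_one \<equiv> gr3_vec 1 0 0 0 0 0 0 0"

abbreviation gr3_top :: "'a::field \<Rightarrow> nat set \<Rightarrow> 'a" where
  "gr3_top t \<equiv> gr3_vec 0 0 0 0 0 0 0 t"

definition gr3_scale :: "'a::field \<Rightarrow> (nat set \<Rightarrow> 'a) \<Rightarrow> nat set \<Rightarrow> 'a" where
  "gr3_scale c x = (\<lambda>S. c * x S)"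

lemma gsign_eq_sum:
  assumes "finite T" and "finite U"
  shows "gsign T U = (-1) ^ (\<Sum>i\<in>T. \<Sum>j\<in>U. if j < i then 1 else 0)"
proof -
  have "{(i, j). i \<in> T \<and> j \<in> U \<and> j < i} = {p \<in> T \<times> U. snd p < fst p}"
    by auto
  then have "card {(i, j). i \<in> T \<and> j \<in> U \<and> j < i} = (\<Sum>p\<in>T \<times> U. if snd p < fst p then 1 else 0)"
    using assms by (simp add: sum.inter_filter[symmetric])
  then show ?thesis
    unfolding gsign_def by (simp add: sum.cartesian_product case_prod_beta)
qed

lemma sum_Pow_insert:
  assumes "a \<notin> A" and "finite A"
  shows "sum f (Pow (insert a A)) = sum f (Pow A) + (\<Sum>T\<in>Pow A. f (insert a T))"
proof -
  have "sum f (Pow (insert a A)) = sum f (Pow A) + sum f (insert a ` Pow A)"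
    unfolding Pow_insert by (rule sum.union_disjoint) (use assms in auto)
  also have "sum f (insert a ` Pow A) = (\<Sum>T\<in>Pow A. f (insert a T))"
    by (rule sum.reindex_cong[where l = "insert a"]) (use assms in \<open>auto simp: inj_on_def\<close>)
  finally show ?thesis .
qed

lemma subset_012_cases:
  assumes "S \<subseteq> {0::nat,1,2}"
  shows "S = {} \<or> S = {0} \<or> S = {1} \<or> S = {2} \<or> S = {0,1} \<or> S = {0,2} \<or> S = {1,2} \<or> S = {0,1,2}"
proof -
  have "Pow {0::nat,1,2} = {{},{0},{1},{2},{0,1},{0,2},{1,2},{0,1,2}}"
    by (simp add: Pow_insert insert_commute)
  then show ?thesis using assms by blast
qed

lemma gr3_mult_vec:
  "gr3_mult (gr3_vec a0 a1 a2 a3 a4 a5 a6 a7) (gr3_vec b0 b1 b2 b3 b4 b5 b6 b7) =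
     gr3_vec (a0*b0) (a0*b1 + a1*b0) (a0*b2 + a2*b0) (a0*b3 + a3*b0)
       (a0*b4 + a1*b2 - a2*b1 + a4*b0) (a0*b5 + a1*b3 - a3*b1 + a5*b0)
       (a0*b6 + a2*b3 - a3*b2 + a6*b0)
       (a0*b7 + a1*b6 - a2*b5 + a3*b4 + a4*b3 - a5*b2 + a6*b1 + a7*b0)"
  (is "?lhs = ?rhs")
proof
  fix S :: "nat set"
  show "?lhs S = ?rhs S"
  proof (cases "S \<subseteq> {0,1,2}")
    case True
    with subset_012_cases[OF True] show ?thesis
      by (elim disjE)
        (simp_all add: gr3_mult_def gr3_vec_def gsign_eq_sum sum_Pow_insert insert_Diff_if)
  qed (simp add: gr3_mult_def gr3_vec_def)
qed

lemma gr3_vec_add: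
  "gr3_vec a0 a1 a2 a3 a4 a5 a6 a7 + gr3_vec b0 b1 b2 b3 b4 b5 b6 b7 =
     gr3_vec (a0+b0) (a1+b1) (a2+b2) (a3+b3) (a4+b4) (a5+b5) (a6+b6) (a7+b7)"
  by (simp add: fun_eq_iff gr3_vec_def)

lemma gr3_scale_vec:
  "gr3_scale c (gr3_vec a0 a1 a2 a3 a4 a5 a6 a7) =
     gr3_vec (c*a0) (c*a1) (c*a2) (c*a3) (c*a4) (c*a5) (c*a6) (c*a7)"
  by (simp add: fun_eq_iff gr3_vec_def gr3_scale_def)

lemma gr3_vec_zero: "0 = gr3_vec 0 0 0 0 0 0 0 0"
  by (simp add: fun_eq_iff gr3_vec_def)

lemma gr3_vec_eq_iff:
  "gr3_vec a0 a1 a2 a3 a4 a5 a6 a7 = gr3_vec b0 b1 b2 b3 b4 b5 b6 b7 \<longleftrightarrow>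
     a0 = b0 \<and> a1 = b1 \<and> a2 = b2 \<and> a3 = b3 \<and> a4 = b4 \<and> a5 = b5 \<and> a6 = b6 \<and> a7 = b7"
proof
  assume "gr3_vec a0 a1 a2 a3 a4 a5 a6 a7 = gr3_vec b0 b1 b2 b3 b4 b5 b6 b7"
  then have "\<And>S. gr3_vec a0 a1 a2 a3 a4 a5 a6 a7 S = gr3_vec b0 b1 b2 b3 b4 b5 b6 b7 S"
    by simp
  from this[of "{}"] this[of "{0}"] this[of "{1}"] this[of "{2}"]
    this[of "{0,1}"] this[of "{0,2}"] this[of "{1,2}"] this[of "{0,1,2}"]
  show "a0 = b0 \<and> a1 = b1 \<and> a2 = b2 \<and> a3 = b3 \<and> a4 = b4 \<and> a5 = b5 \<and> a6 = b6 \<and> a7 = b7"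
    by (simp add: gr3_vec_def)
qed simp

lemma gr3_vec_scalar_part [simp]: "gr3_vec c0 c1 c2 c3 c4 c5 c6 c7 {} = c0"
  by (simp add: gr3_vec_def)

lemma gr3_vec_in_carrier [simp]: "gr3_vec c0 c1 c2 c3 c4 c5 c6 c7 \<in> gr3_carrier"
  by (simp add: gr3_carrier_def gr3_vec_def)

lemma gr3_carrier_eq_vec:
  assumes "x \<in> gr3_carrier"
  shows "x = gr3_vec (x {}) (x {0}) (x {1}) (x {2}) (x {0,1}) (x {0,2}) (x {1,2}) (x {0,1,2})"
proof
  fix S
  show "x S = gr3_vec (x {}) (x {0}) (x {1}) (x {2}) (x {0,1}) (x {0,2}) (x {1,2}) (x {0,1,2}) S"
  proof (cases "S \<subseteq> {0,1,2}")
    case True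
    with subset_012_cases[OF True] show ?thesis by (elim disjE) (simp_all add: gr3_vec_def)
  qed (use assms in \<open>simp add: gr3_carrier_def gr3_vec_def\<close>)
qed

lemma gr3_carrier_cases:
  assumes "x \<in> gr3_carrier"
  obtains c0 c1 c2 c3 c4 c5 c6 c7 where "x = gr3_vec c0 c1 c2 c3 c4 c5 c6 c7"
  using gr3_carrier_eq_vec[OF assms] by (rule that)

lemma gr3_mult_closed: "x \<in> gr3_carrier \<Longrightarrow> y \<in> gr3_carrier \<Longrightarrow> gr3_mult x y \<in> gr3_carrier"
  by (elim gr3_carrier_cases) (simp add: gr3_mult_vec)

lemma gr3_add_closed: "x \<in> gr3_carrier \<Longrightarrow> y \<in> gr3_carrier \<Longrightarrow> x + y \<in> gr3_carrier"
  by (elim gr3_carrier_cases) (simp add: gr3_vec_add)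

lemma gr3_scale_closed: "x \<in> gr3_carrier \<Longrightarrow> gr3_scale c x \<in> gr3_carrier"
  by (elim gr3_carrier_cases) (simp add: gr3_scale_vec)

lemma gr3_mult_one_left: "x \<in> gr3_carrier \<Longrightarrow> gr3_mult gr3_one x = x"
  by (elim gr3_carrier_cases) (simp add: gr3_mult_vec)

lemma gr3_mult_one_right: "x \<in> gr3_carrier \<Longrightarrow> gr3_mult x gr3_one = x"
  by (elim gr3_carrier_cases) (simp add: gr3_mult_vec)

text \<open>The element \<open>u - c\<close> has no scalar part, hence \<open>(u - c)\<^sup>3 = 0\<close>.\<close>
lemma gr3_shifted_cube:
  assumes "u \<in> gr3_carrier"
  shows "gr3_mult (gr3_mult u u) u + gr3_scale (-3 * u {}) (gr3_mult u u)
           + gr3_scale (3 * (u {})^2) u = gr3_scale ((u {})^3) gr3_one"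
  using assms
  by (elim gr3_carrier_cases)
    (simp add: gr3_mult_vec gr3_scale_vec gr3_vec_add gr3_vec_eq_iff algebra_simps
      power2_eq_square power3_eq_cube)

locale gr3_rota_baxter =
  fixes R :: "(nat set \<Rightarrow> 'a::field) \<Rightarrow> nat set \<Rightarrow> 'a"
  assumes rota_baxter: "gr3_RB0 R"
begin

lemma closed: "x \<in> gr3_carrier \<Longrightarrow> R x \<in> gr3_carrier"
  using rota_baxter unfolding gr3_RB0_def gr3_linear_def by blast

lemma additive: "x \<in> gr3_carrier \<Longrightarrow> y \<in> gr3_carrier \<Longrightarrow> R (x + y) = R x + R y"
  using rota_baxter unfolding gr3_RB0_def gr3_linear_def plus_fun_def by blast

lemma homogeneous: "x \<in> gr3_carrier \<Longrightarrow> R (gr3_scale c x) = gr3_scale c (R x)"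
  using rota_baxter unfolding gr3_RB0_def gr3_linear_def gr3_scale_def by blast

lemma rb_identity:
  "x \<in> gr3_carrier \<Longrightarrow> y \<in> gr3_carrier \<Longrightarrow>
     gr3_mult (R x) (R y) = R (gr3_mult (R x) y + gr3_mult x (R y))"
  using rota_baxter unfolding gr3_RB0_def plus_fun_def by blast

lemma image_mult_closed:
  assumes "p \<in> R ` gr3_carrier" and "q \<in> R ` gr3_carrier"
  shows "gr3_mult p q \<in> R ` gr3_carrier"
proof -
  obtain x y where x: "x \<in> gr3_carrier" "p = R x" and y: "y \<in> gr3_carrier" "q = R y"
    using assms by blast
  have "gr3_mult (R x) y + gr3_mult x (R y) \<in> gr3_carrier"
    by (intro gr3_add_closed gr3_mult_closed closed x y)
  then show ?thesis
    using rb_identity[OF x(1) y(1)] x(2) y(2) by (metis image_eqI)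
qed

lemma image_add_closed:
  "p \<in> R ` gr3_carrier \<Longrightarrow> q \<in> R ` gr3_carrier \<Longrightarrow> p + q \<in> R ` gr3_carrier"
  by (auto simp: additive[symmetric] intro: gr3_add_closed)

lemma image_scale_closed: "p \<in> R ` gr3_carrier \<Longrightarrow> gr3_scale c p \<in> R ` gr3_carrier"
  by (auto simp: homogeneous[symmetric] intro: gr3_scale_closed)

lemma one_notin_image: "gr3_one \<notin> R ` gr3_carrier"
proof
  assume "gr3_one \<in> R ` gr3_carrier"
  then obtain z where z: "z \<in> gr3_carrier" and Rz: "R z = gr3_one" by auto
  have "gr3_one = gr3_mult (R z) (R z)"
    unfolding Rz by (simp add: gr3_mult_vec)
  also have "\<dots> = R (z + z)"
    using rb_identity[OF z z] unfolding Rz by (simp only: gr3_mult_one_left gr3_mult_one_right z)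
  also have "\<dots> = R z + R z"
    by (rule additive[OF z z])
  also have "\<dots> = gr3_vec (1 + 1) 0 0 0 0 0 0 0"
    unfolding Rz gr3_vec_add by simp
  finally have "(1::'a) = 1 + 1"
    unfolding gr3_vec_eq_iff by blast
  then show False
    by (metis add_cancel_right_right one_neq_zero)
qed

text \<open>If \<open>R x\<close> had scalar part \<open>c \<noteq> 0\<close>, the image, a subalgebra, would contain
  \<open>u\<^sup>3 - 3 c u\<^sup>2 + 3 c\<^sup>2 u = c\<^sup>3\<close> and hence the unit.\<close>
lemma image_scalar_part: "x \<in> gr3_carrier \<Longrightarrow> R x {} = 0"
proof (rule ccontr)
  assume x: "x \<in> gr3_carrier" and c: "R x {} \<noteq> 0"
  define u where "u = R x"
  have u: "u \<in> R ` gr3_carrier"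
    using x unfolding u_def by blast
  then have "gr3_mult (gr3_mult u u) u + gr3_scale (-3 * u {}) (gr3_mult u u)
      + gr3_scale (3 * (u {})^2) u \<in> R ` gr3_carrier"
    by (intro image_add_closed image_scale_closed image_mult_closed)
  then have "gr3_scale (1 / (u {})^3) (gr3_scale ((u {})^3) gr3_one) \<in> R ` gr3_carrier"
    unfolding gr3_shifted_cube[OF closed[OF x, folded u_def]] by (rule image_scale_closed)
  moreover have "gr3_scale (1 / (u {})^3) (gr3_scale ((u {})^3) gr3_one) = gr3_one"
    using c unfolding u_def by (simp add: gr3_scale_vec)
  ultimately show False
    using one_notin_image by simp
qed

lemma image_cases:
  assumes "x \<in> gr3_carrier"
  obtains c1 c2 c3 c4 c5 c6 c7 where "R x = gr3_vec 0 c1 c2 c3 c4 c5 c6 c7"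
  using closed[OF assms] image_scalar_part[OF assms]
  by (metis gr3_carrier_cases gr3_vec_scalar_part)

lemma image_vec_exists: "x \<in> gr3_carrier \<Longrightarrow> \<exists>c1 c2 c3 c4 c5 c6 c7. R x = gr3_vec 0 c1 c2 c3 c4 c5 c6 c7"
  by (metis image_cases)

lemma rb_identity_unit_right:
  "x \<in> gr3_carrier \<Longrightarrow> gr3_mult (R x) (R gr3_one) = R (R x) + R (gr3_mult x (R gr3_one))"
  using rb_identity[of x gr3_one]
  by (simp add: gr3_mult_one_right closed additive gr3_mult_closed)

lemma rb_identity_unit_left:
  "x \<in> gr3_carrier \<Longrightarrow> gr3_mult (R gr3_one) (R x) = R (gr3_mult (R gr3_one) x) + R (R x)"
  using rb_identity[of gr3_one x]
  by (simp add: gr3_mult_one_left closed additive gr3_mult_closed)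

lemma R_R_unit_top:
  assumes two: "(2::'a) \<noteq> 0"
  obtains d where "R (R gr3_one) = gr3_top d"
proof -
  obtain a1 a2 a3 a4 a5 a6 a7 where a: "R gr3_one = gr3_vec 0 a1 a2 a3 a4 a5 a6 a7"
    by (rule image_cases[OF gr3_vec_in_carrier])
  obtain r0 r1 r2 r3 r4 r5 r6 r7 where r: "R (R gr3_one) = gr3_vec r0 r1 r2 r3 r4 r5 r6 r7"
    by (rule gr3_carrier_cases[OF closed[OF closed[OF gr3_vec_in_carrier]]])
  have "gr3_mult (R gr3_one) (R gr3_one) = R (R gr3_one) + R (R gr3_one)"
    using rb_identity_unit_right[of gr3_one]
    by (simp only: gr3_mult_one_left closed gr3_vec_in_carrier)
  then have "gr3_top (2 * (a1*a6 - a2*a5 + a3*a4)) = gr3_vec (2*r0) (2*r1) (2*r2) (2*r3) (2*r4) (2*r5) (2*r6) (2*r7)"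
    unfolding r unfolding a gr3_mult_vec gr3_vec_add by (simp add: algebra_simps)
  with two show thesis
    by (intro that[of r7]) (simp add: r gr3_vec_eq_iff)
qed

lemma R_top_scale: "R (gr3_top t) = gr3_scale t (R (gr3_top 1))"
  using homogeneous[of "gr3_top 1" t] by (simp add: gr3_scale_vec)

text \<open>Since \<open>R y\<close> has no scalar part, \<open>e\<^sub>0\<^sub>1\<^sub>2 R y = 0\<close>, so the Rota--Baxter identity for
  \<open>e\<^sub>0\<^sub>1\<^sub>2\<close> and \<open>y\<close> loses its second summand.\<close>
lemma R_top_mult:
  assumes y: "y \<in> gr3_carrier"
  shows "gr3_mult (R (gr3_top 1)) (R y) = R (gr3_mult (R (gr3_top 1)) y)"
proof -
  obtain c1 c2 c3 c4 c5 c6 c7 where "R y = gr3_vec 0 c1 c2 c3 c4 c5 c6 c7"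
    using y by (rule image_cases)
  then have "gr3_mult (gr3_top 1) (R y) = 0"
    by (simp add: gr3_mult_vec gr3_vec_zero)
  with rb_identity[OF gr3_vec_in_carrier y] show ?thesis
    by simp
qed

text \<open>With \<open>b = R e\<^sub>0\<^sub>1\<^sub>2\<close>, a monomial \<open>y\<close> with \<open>b y = s e\<^sub>0\<^sub>1\<^sub>2\<close> yields \<open>b R y = s b\<close>, and
  comparing the coordinate that \<open>y\<close> picks out gives \<open>s\<^sup>2 = 0\<close>; this kills the coordinates of
  \<open>b\<close> degree by degree.\<close>
lemma R_top_zero: "R (gr3_top t) = 0"
proof -
  obtain b1 b2 b3 b4 b5 b6 b7 where b: "R (gr3_top 1) = gr3_vec 0 b1 b2 b3 b4 b5 b6 b7"
    by (rule image_cases[OF gr3_vec_in_carrier])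
  have absorb: "gr3_mult (gr3_vec 0 b1 b2 b3 b4 b5 b6 b7) (R y) = gr3_scale s (gr3_vec 0 b1 b2 b3 b4 b5 b6 b7)"
    if "y \<in> gr3_carrier" and "gr3_mult (gr3_vec 0 b1 b2 b3 b4 b5 b6 b7) y = gr3_top s" for y s
    using R_top_mult[OF that(1)] that(2) R_top_scale[of s] by (simp add: b)
  have "b1 = 0"
    using absorb[of "gr3_vec 0 0 0 0 0 0 1 0" b1] image_vec_exists[of "gr3_vec 0 0 0 0 0 0 1 0"]
    by (auto simp: gr3_mult_vec gr3_scale_vec gr3_vec_eq_iff)
  have "b2 = 0"
    using absorb[of "gr3_vec 0 0 0 0 0 1 0 0" "-b2"] image_vec_exists[of "gr3_vec 0 0 0 0 0 1 0 0"]
    by (auto simp: gr3_mult_vec gr3_scale_vec gr3_vec_eq_iff)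
  have "b3 = 0"
    using absorb[of "gr3_vec 0 0 0 0 1 0 0 0" b3] image_vec_exists[of "gr3_vec 0 0 0 0 1 0 0 0"]
    by (auto simp: gr3_mult_vec gr3_scale_vec gr3_vec_eq_iff)
  have "b4 = 0"
    using absorb[of "gr3_vec 0 0 0 1 0 0 0 0" b4] image_vec_exists[of "gr3_vec 0 0 0 1 0 0 0 0"] \<open>b1 = 0\<close> \<open>b2 = 0\<close>
    by (auto simp: gr3_mult_vec gr3_scale_vec gr3_vec_eq_iff)
  have "b5 = 0"
    using absorb[of "gr3_vec 0 0 1 0 0 0 0 0" "-b5"] image_vec_exists[of "gr3_vec 0 0 1 0 0 0 0 0"] \<open>b1 = 0\<close> \<open>b3 = 0\<close>
    by (auto simp: gr3_mult_vec gr3_scale_vec gr3_vec_eq_iff)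
  have "b6 = 0"
    using absorb[of "gr3_vec 0 1 0 0 0 0 0 0" b6] image_vec_exists[of "gr3_vec 0 1 0 0 0 0 0 0"] \<open>b2 = 0\<close> \<open>b3 = 0\<close>
    by (auto simp: gr3_mult_vec gr3_scale_vec gr3_vec_eq_iff)
  have "b7 = 0"
    using absorb[of gr3_one b7] image_vec_exists[of gr3_one] \<open>b1 = 0\<close> \<open>b2 = 0\<close> \<open>b3 = 0\<close>
      \<open>b4 = 0\<close> \<open>b5 = 0\<close> \<open>b6 = 0\<close>
    by (auto simp: gr3_mult_vec gr3_scale_vec gr3_vec_eq_iff)
  then show ?thesis
    using R_top_scale[of t] \<open>b1 = 0\<close> \<open>b2 = 0\<close> \<open>b3 = 0\<close> \<open>b4 = 0\<close> \<open>b5 = 0\<close> \<open>b6 = 0\<close>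
    by (simp add: b gr3_scale_vec gr3_vec_zero)
qed

text \<open>Adding the identities for \<open>(x, 1)\<close> and \<open>(1, x)\<close> gives
  \<open>R x a + a R x = 2 R (R x) + R (x a + a x)\<close> with \<open>a = R 1\<close>; elements without scalar part
  anticommute up to the top degree, so everything except \<open>2 R (R x)\<close> is a multiple of \<open>e\<^sub>0\<^sub>1\<^sub>2\<close>.\<close>
lemma R_R_top:
  assumes two: "(2::'a) \<noteq> 0" and x: "x \<in> gr3_carrier"
  obtains t where "R (R x) = gr3_top t"
proof -
  obtain a1 a2 a3 a4 a5 a6 a7 where a: "R gr3_one = gr3_vec 0 a1 a2 a3 a4 a5 a6 a7"
    by (rule image_cases[OF gr3_vec_in_carrier])
  obtain d where d: "R (R gr3_one) = gr3_top d"
    using two by (rule R_R_unit_top)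
  obtain x0 x1 x2 x3 x4 x5 x6 x7 where xc: "x = gr3_vec x0 x1 x2 x3 x4 x5 x6 x7"
    using x by (rule gr3_carrier_cases)
  obtain u1 u2 u3 u4 u5 u6 u7 where u: "R x = gr3_vec 0 u1 u2 u3 u4 u5 u6 u7"
    using x by (rule image_cases)
  obtain r0 r1 r2 r3 r4 r5 r6 r7 where r: "R (R x) = gr3_vec r0 r1 r2 r3 r4 r5 r6 r7"
    using closed[OF closed[OF x]] by (rule gr3_carrier_cases)
  define s where "s = 2 * (x1*a6 - x2*a5 + x3*a4 + x4*a3 - x5*a2 + x6*a1)"
  have anticomm: "gr3_mult x (R gr3_one) + gr3_mult (R gr3_one) x
      = gr3_scale (2 * x0) (R gr3_one) + gr3_top s"
    unfolding xc a s_def gr3_mult_vec gr3_scale_vec gr3_vec_add gr3_vec_eq_iff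
    by (simp add: algebra_simps)
  have "R (gr3_mult x (R gr3_one)) + R (gr3_mult (R gr3_one) x)
      = R (gr3_mult x (R gr3_one) + gr3_mult (R gr3_one) x)"
    by (simp add: additive gr3_mult_closed closed x)
  also have "\<dots> = R (gr3_scale (2 * x0) (R gr3_one)) + R (gr3_top s)"
    unfolding anticomm by (rule additive) (simp_all add: gr3_scale_closed closed)
  also have "\<dots> = gr3_top (2 * x0 * d)"
    by (simp add: homogeneous closed d R_top_zero gr3_scale_vec)
  finally have "R (gr3_mult x (R gr3_one)) + R (gr3_mult (R gr3_one) x) = gr3_top (2 * x0 * d)" .
  moreover have "gr3_mult (R x) (R gr3_one) + gr3_mult (R gr3_one) (R x)
      = (R (R x) + R (R x)) + (R (gr3_mult x (R gr3_one)) + R (gr3_mult (R gr3_one) x))"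
    unfolding rb_identity_unit_right[OF x] rb_identity_unit_left[OF x] by (simp add: ac_simps)
  ultimately have "gr3_mult (R x) (R gr3_one) + gr3_mult (R gr3_one) (R x)
      = R (R x) + R (R x) + gr3_top (2 * x0 * d)"
    by simp
  then have "r0 = 0 \<and> r1 = 0 \<and> r2 = 0 \<and> r3 = 0 \<and> r4 = 0 \<and> r5 = 0 \<and> r6 = 0"
    unfolding r unfolding u a gr3_mult_vec gr3_vec_add gr3_vec_eq_iff
    using two by (simp add: algebra_simps)
  then show thesis
    using r by (intro that[of r7]) simp
qed

lemma R_cube_zero:
  assumes "(2::'a) \<noteq> 0" and "x \<in> gr3_carrier"
  shows "R (R (R x)) = 0"
proof -
  obtain t where "R (R x) = gr3_top t"
    using assms by (rule R_R_top)
  then show ?thesis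
    by (simp add: R_top_zero)
qed

end

definition rb_witness :: "(nat set \<Rightarrow> 'a::field) \<Rightarrow> nat set \<Rightarrow> 'a" where
  "rb_witness x = gr3_vec 0 (x {}) 0 0 0 0 (x {}) (x {0})"

lemma rb_witness_vec: "rb_witness (gr3_vec c0 c1 c2 c3 c4 c5 c6 c7) = gr3_vec 0 c0 0 0 0 0 c0 c1"
  by (simp add: rb_witness_def gr3_vec_def)

lemma gr3_RB0_rb_witness: "gr3_RB0 rb_witness"
proof -
  have closed: "rb_witness x \<in> gr3_carrier" for x :: "nat set \<Rightarrow> 'a"
    by (simp add: rb_witness_def)
  have additive: "rb_witness (x + y) = rb_witness x + rb_witness y" for x y :: "nat set \<Rightarrow> 'a"
    by (simp add: rb_witness_def gr3_vec_add)
  have homogeneous: "rb_witness (gr3_scale c x) = gr3_scale c (rb_witness x)" for c and x :: "nat set \<Rightarrow> 'a"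
    unfolding rb_witness_def gr3_scale_vec by (simp add: gr3_scale_def)
  have identity: "gr3_mult (rb_witness x) (rb_witness y)
      = rb_witness (gr3_mult (rb_witness x) y + gr3_mult x (rb_witness y))"
    if "x \<in> gr3_carrier" and "y \<in> gr3_carrier" for x y :: "nat set \<Rightarrow> 'a"
    using that by (elim gr3_carrier_cases)
      (simp add: rb_witness_vec gr3_mult_vec gr3_vec_add gr3_vec_eq_iff algebra_simps)
  show ?thesis
    unfolding gr3_RB0_def gr3_linear_def
    using closed additive homogeneous identity
    by (simp add: plus_fun_def gr3_scale_def)
qed

lemma rb_witness_power_unit_nonzero:
  assumes "m < 3"
  shows "(rb_witness ^^ m) gr3_one \<noteq> 0"
proof -
  consider "m = 0" | "m = 1" | "m = 2"
    using assms by linarith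
  then show ?thesis
    by cases (simp_all add: numeral_2_eq_2 rb_witness_vec gr3_vec_zero gr3_vec_eq_iff)
qed

theorem corollary12:
  assumes "(2::'a::field) \<noteq> 0" and "(3::'a) \<noteq> 0"
  shows "rb_gr3 TYPE('a) = 3"
  unfolding rb_gr3_def zero_fun_def[symmetric]
proof (rule Least_equality)
  show "\<forall>R :: (nat set \<Rightarrow> 'a) \<Rightarrow> nat set \<Rightarrow> 'a. gr3_RB0 R \<longrightarrow> (\<forall>x\<in>gr3_carrier. (R ^^ 3) x = 0)"
  proof (intro allI impI ballI)
    fix R :: "(nat set \<Rightarrow> 'a) \<Rightarrow> nat set \<Rightarrow> 'a" and x :: "nat set \<Rightarrow> 'a"
    assume "gr3_RB0 R" and "x \<in> gr3_carrier"
    then have "R (R (R x)) = 0"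
      by (intro gr3_rota_baxter.R_cube_zero gr3_rota_baxter.intro assms(1))
    then show "(R ^^ 3) x = 0"
      by (simp add: numeral_3_eq_3)
  qed
next
  fix m
  assume "\<forall>R :: (nat set \<Rightarrow> 'a) \<Rightarrow> nat set \<Rightarrow> 'a. gr3_RB0 R \<longrightarrow> (\<forall>x\<in>gr3_carrier. (R ^^ m) x = 0)"
  then have "(rb_witness ^^ m) gr3_one = (0 :: nat set \<Rightarrow> 'a)"
    using gr3_RB0_rb_witness gr3_vec_in_carrier by blast
  then show "3 \<le> m"
    using rb_witness_power_unit_nonzero by (meson not_le)
qed

end
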